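(* Let $(\Phi,D)$ be a domain-free continuous information algebra. Then $(\Phi,D)$ is s-continuous if and only if for every directed subset $X\subseteq\Phi$ and every $x\in D$, $(\vee X)^{\Rightarrow x}=\bigvee_{\phi\in X}\phi^{\Rightarrow x}$.
   Context: A domain-free information algebra $(\Phi,D)$ consists of a set $\Phi$, a lattice $D$, a combination $\otimes$ and a focusing $(\psi,x)\mapsto\psi^{\Rightarrow x}$ ($x\in D$) such that: $\otimes$ is associative, commutative with neutral element $e$; $(\psi^{\Rightarrow y})^{\Rightarrow x}=\psi^{\Rightarrow x\wedge y}$; $(\phi^{\Rightarrow x}\otimes\psi)^{\Rightarrow x}=\phi^{\Rightarrow x}\otimes\psi^{\Rightarrow x}$; every $\psi$ has some $x$ with $\psi^{\Rightarrow x}=\psi$; $\psi\otimes\psi^{\Rightarrow x}=\psi$. Order: $\psi\le\phi$ iff $\psi\otimes\phi=\phi$; suprema refer to this order. $a\ll b$ means: for every directed $X$ with $b\le\vee X$ there is $c\in X$ with $a\le c$. $(\Phi,D)$, with $D$ having a top element, is continuous (resp. s-continuous) if there exists $\Gamma\subseteq\Phi$, closed under combination and containing $e$, such that every directed subset of $\Gamma$ has a supremum in $\Phi$ and $\phi=\vee\{\psi\in\Gamma:\psi\ll\phi\}$ for all $\phi\in\Phi$ (resp. $\phi^{\Rightarrow x}=\vee\{\psi\in\Gamma:\psi=\psi^{\Rightarrow x}\ll\phi\}$ for all $\phi\in\Phi$, $x\in D$). *)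

theory Defs
  imports Main
begin

text \<open>A domain-free information algebra: the set Phi is the carrier type 'a,
  D is a lattice 'd, comb is combination, e the neutral element and
  foc psi x stands for psi focused on x.\<close>

definition info_algebra ::
  "('a \<Rightarrow> 'a \<Rightarrow> 'a) \<Rightarrow> 'a \<Rightarrow> ('a \<Rightarrow> 'd::lattice \<Rightarrow> 'a) \<Rightarrow> bool" where
  "info_algebra comb e foc \<longleftrightarrow>
     (\<forall>a b c. comb (comb a b) c = comb a (comb b c)) \<and>
     (\<forall>a b. comb a b = comb b a) \<and>
     (\<forall>a. comb a e = a) \<and>
     (\<forall>\<psi> x y. foc (foc \<psi> y) x = foc \<psi> (inf x y)) \<and>
     (\<forall>\<phi> \<psi> x. foc (comb (foc \<phi> x) \<psi>) x = comb (foc \<phi> x) (foc \<psi> x)) \<and>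
     (\<forall>\<psi>. \<exists>x. foc \<psi> x = \<psi>) \<and>
     (\<forall>\<psi> x. comb \<psi> (foc \<psi> x) = \<psi>)"

definition ia_le :: "('a \<Rightarrow> 'a \<Rightarrow> 'a) \<Rightarrow> 'a \<Rightarrow> 'a \<Rightarrow> bool" where
  "ia_le comb \<psi> \<phi> \<longleftrightarrow> comb \<psi> \<phi> = \<phi>"

definition ia_is_sup :: "('a \<Rightarrow> 'a \<Rightarrow> 'a) \<Rightarrow> 'a set \<Rightarrow> 'a \<Rightarrow> bool" where
  "ia_is_sup comb X s \<longleftrightarrow> (\<forall>a\<in>X. ia_le comb a s) \<and>
     (\<forall>u. (\<forall>a\<in>X. ia_le comb a u) \<longrightarrow> ia_le comb s u)"

definition ia_directed :: "('a \<Rightarrow> 'a \<Rightarrow> 'a) \<Rightarrow> 'a set \<Rightarrow> bool" where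
  "ia_directed comb X \<longleftrightarrow> X \<noteq> {} \<and>
     (\<forall>a\<in>X. \<forall>b\<in>X. \<exists>c\<in>X. ia_le comb a c \<and> ia_le comb b c)"

definition ia_way_below :: "('a \<Rightarrow> 'a \<Rightarrow> 'a) \<Rightarrow> 'a \<Rightarrow> 'a \<Rightarrow> bool" where
  "ia_way_below comb a b \<longleftrightarrow>
     (\<forall>X s. ia_directed comb X \<longrightarrow> ia_is_sup comb X s \<longrightarrow> ia_le comb b s \<longrightarrow>
        (\<exists>c\<in>X. ia_le comb a c))"

definition ia_basis_pre :: "('a \<Rightarrow> 'a \<Rightarrow> 'a) \<Rightarrow> 'a \<Rightarrow> 'a set \<Rightarrow> bool" where
  "ia_basis_pre comb e \<Gamma> \<longleftrightarrow> (\<forall>a\<in>\<Gamma>. \<forall>b\<in>\<Gamma>. comb a b \<in> \<Gamma>) \<and> e \<in> \<Gamma> \<and>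
     (\<forall>X. X \<subseteq> \<Gamma> \<longrightarrow> ia_directed comb X \<longrightarrow> (\<exists>s. ia_is_sup comb X s))"

definition ia_continuous ::
  "('a \<Rightarrow> 'a \<Rightarrow> 'a) \<Rightarrow> 'a \<Rightarrow> ('a \<Rightarrow> 'd::bounded_lattice_top \<Rightarrow> 'a) \<Rightarrow> bool" where
  "ia_continuous comb e foc \<longleftrightarrow> info_algebra comb e foc \<and>
     (\<exists>\<Gamma>. ia_basis_pre comb e \<Gamma> \<and>
        (\<forall>\<phi>. ia_is_sup comb {\<psi>\<in>\<Gamma>. ia_way_below comb \<psi> \<phi>} \<phi>))"

definition ia_s_continuous ::
  "('a \<Rightarrow> 'a \<Rightarrow> 'a) \<Rightarrow> 'a \<Rightarrow> ('a \<Rightarrow> 'd::bounded_lattice_top \<Rightarrow> 'a) \<Rightarrow> bool" where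
  "ia_s_continuous comb e foc \<longleftrightarrow> info_algebra comb e foc \<and>
     (\<exists>\<Gamma>. ia_basis_pre comb e \<Gamma> \<and>
        (\<forall>\<phi> x. ia_is_sup comb {\<psi>\<in>\<Gamma>. foc \<psi> x = \<psi> \<and> ia_way_below comb \<psi> \<phi>} (foc \<phi> x)))"

end

theory Submission
  imports Defs
begin

text \<open>Focusing is monotone, so \<open>\<phi>\<^sup>\<Rightarrow>\<^sup>x\<close> bounds the foci of a directed set with
  supremum \<open>\<phi>\<close>. Under s-continuity \<open>\<phi>\<^sup>\<Rightarrow>\<^sup>x\<close> is the supremum of elements \<open>\<psi> = \<psi>\<^sup>\<Rightarrow>\<^sup>x \<ll> \<phi>\<close>,
  and each of them lies below a member of the directed set, hence below its focus; so focusing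
  preserves directed suprema. Conversely, focusing the directed set of basis elements way below
  \<open>\<phi>\<close> yields elements \<open>\<psi> = \<psi>\<^sup>\<Rightarrow>\<^sup>x \<ll> \<phi>\<close> with supremum \<open>\<phi>\<^sup>\<Rightarrow>\<^sup>x\<close>. The whole of \<open>\<Phi>\<close> can
  serve as basis for s-continuity, because a continuous algebra is a dcpo: a directed set \<open>Y\<close>
  has the same upper bounds as the basis elements way below members of \<open>Y\<close>.\<close>

locale information_algebra =
  fixes comb :: "'a \<Rightarrow> 'a \<Rightarrow> 'a" and e :: 'a and foc :: "'a \<Rightarrow> 'd::lattice \<Rightarrow> 'a"
  assumes info_algebra: "info_algebra comb e foc"
begin

lemma comb_assoc: "comb (comb a b) c = comb a (comb b c)"
  using info_algebra unfolding info_algebra_def by blast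

lemma comb_commute: "comb a b = comb b a"
  using info_algebra unfolding info_algebra_def by blast

lemma comb_e_right: "comb a e = a"
  using info_algebra unfolding info_algebra_def by blast

lemma comb_e_left: "comb e a = a"
  using comb_e_right comb_commute by metis

lemma foc_foc: "foc (foc \<psi> y) x = foc \<psi> (inf x y)"
  using info_algebra unfolding info_algebra_def by blast

lemma foc_comb_foc: "foc (comb (foc \<phi> x) \<psi>) x = comb (foc \<phi> x) (foc \<psi> x)"
  using info_algebra unfolding info_algebra_def by blast

lemma comb_foc_absorb: "comb \<psi> (foc \<psi> x) = \<psi>"
  using info_algebra unfolding info_algebra_def by blast

lemma foc_support: "\<exists>x. foc \<psi> x = \<psi>"
  using info_algebra unfolding info_algebra_def by blast

lemma comb_idem: "comb a a = a"
  using foc_support[of a] comb_foc_absorb[of a] by metis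

abbreviation le :: "'a \<Rightarrow> 'a \<Rightarrow> bool" where "le \<equiv> ia_le comb"

abbreviation way_below :: "'a \<Rightarrow> 'a \<Rightarrow> bool" where "way_below \<equiv> ia_way_below comb"

lemma le_refl: "le a a"
  by (simp add: ia_le_def comb_idem)

lemma le_trans: "le a b \<Longrightarrow> le b c \<Longrightarrow> le a c"
  unfolding ia_le_def by (metis comb_assoc)

lemma le_comb_left: "le a (comb a b)"
  unfolding ia_le_def by (metis comb_assoc comb_idem)

lemma le_comb_right: "le b (comb a b)"
  using le_comb_left comb_commute by metis

lemma comb_least: "le a u \<Longrightarrow> le b u \<Longrightarrow> le (comb a b) u"
  unfolding ia_le_def by (metis comb_assoc)

lemma e_le: "le e a"
  unfolding ia_le_def by (simp add: comb_e_left)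

lemma foc_le: "le (foc a x) a"
  unfolding ia_le_def by (metis comb_commute comb_foc_absorb)

lemma foc_idem: "foc (foc a x) x = foc a x"
  by (simp add: foc_foc)

lemma foc_mono:
  assumes "le a b"
  shows "le (foc a x) (foc b x)"
proof -
  have b: "comb a b = b"
    using assms unfolding ia_le_def .
  have "comb (foc a x) b = b"
    by (metis b comb_assoc comb_commute comb_foc_absorb)
  then have "comb (foc a x) (foc b x) = foc b x"
    by (metis foc_comb_foc)
  then show ?thesis
    unfolding ia_le_def .
qed

lemma is_sup_cofinal:
  assumes "ia_is_sup comb B s" and "\<forall>a\<in>A. le a s" and "\<forall>b\<in>B. \<exists>a\<in>A. le b a"
  shows "ia_is_sup comb A s"
  using assms le_trans unfolding ia_is_sup_def by meson

lemma way_below_le: "way_below a b \<Longrightarrow> le a b"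
proof -
  assume "way_below a b"
  moreover have "ia_directed comb {b}" "ia_is_sup comb {b} b"
    unfolding ia_directed_def ia_is_sup_def using le_refl by auto
  ultimately show "le a b"
    using le_refl unfolding ia_way_below_def by blast
qed

lemma le_way_below_trans: "le a b \<Longrightarrow> way_below b c \<Longrightarrow> way_below a c"
  unfolding ia_way_below_def using le_trans by blast

lemma way_below_le_trans: "way_below a b \<Longrightarrow> le b c \<Longrightarrow> way_below a c"
  unfolding ia_way_below_def using le_trans by blast

lemma e_way_below: "way_below e b"
  unfolding ia_way_below_def ia_directed_def using e_le by blast

lemma comb_way_below:
  assumes "way_below a c" and "way_below b c"
  shows "way_below (comb a b) c"
  unfolding ia_way_below_def
proof (intro allI impI)
  fix X s
  assume X: "ia_directed comb X" and s: "ia_is_sup comb X s" and "le c s"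
  then obtain c1 c2 where "c1 \<in> X" "le a c1" "c2 \<in> X" "le b c2"
    using assms unfolding ia_way_below_def by meson
  moreover obtain c3 where "c3 \<in> X" "le c1 c3" "le c2 c3"
    using X calculation unfolding ia_directed_def by blast
  ultimately show "\<exists>c\<in>X. le (comb a b) c"
    using comb_least le_trans by blast
qed

lemma directed_way_below_basis:
  assumes "ia_basis_pre comb e \<Gamma>"
  shows "ia_directed comb {\<psi>\<in>\<Gamma>. way_below \<psi> \<phi>}"
proof -
  have "e \<in> \<Gamma>" and closed: "\<And>a b. a \<in> \<Gamma> \<Longrightarrow> b \<in> \<Gamma> \<Longrightarrow> comb a b \<in> \<Gamma>"
    using assms unfolding ia_basis_pre_def by auto
  then show ?thesis
    unfolding ia_directed_def using e_way_below comb_way_below le_comb_left le_comb_right by blast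
qed

lemma continuous_directed_has_sup:
  assumes basis: "ia_basis_pre comb e \<Gamma>"
    and approx: "\<forall>\<phi>. ia_is_sup comb {\<psi>\<in>\<Gamma>. way_below \<psi> \<phi>} \<phi>"
    and Y: "ia_directed comb Y"
  shows "\<exists>z. ia_is_sup comb Y z"
proof -
  have "e \<in> \<Gamma>" and closed: "\<And>a b. a \<in> \<Gamma> \<Longrightarrow> b \<in> \<Gamma> \<Longrightarrow> comb a b \<in> \<Gamma>"
    and sup_exists: "\<And>X. X \<subseteq> \<Gamma> \<Longrightarrow> ia_directed comb X \<Longrightarrow> \<exists>s. ia_is_sup comb X s"
    using basis unfolding ia_basis_pre_def by auto
  define Z where "Z = {\<gamma>\<in>\<Gamma>. \<exists>y\<in>Y. way_below \<gamma> y}"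
  have "ia_directed comb Z"
    unfolding ia_directed_def
  proof
    show "Z \<noteq> {}"
      using Y \<open>e \<in> \<Gamma>\<close> e_way_below unfolding Z_def ia_directed_def by blast
    show "\<forall>a\<in>Z. \<forall>b\<in>Z. \<exists>c\<in>Z. le a c \<and> le b c"
    proof (intro ballI)
      fix a b assume "a \<in> Z" "b \<in> Z"
      then obtain y1 y2 where "y1 \<in> Y" "way_below a y1" "y2 \<in> Y" "way_below b y2"
        unfolding Z_def by blast
      moreover obtain y where "y \<in> Y" "le y1 y" "le y2 y"
        using Y calculation unfolding ia_directed_def by blast
      ultimately have "way_below (comb a b) y"
        using way_below_le_trans comb_way_below by blast
      then have "comb a b \<in> Z"
        using \<open>a \<in> Z\<close> \<open>b \<in> Z\<close> \<open>y \<in> Y\<close> closed unfolding Z_def by blast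
      then show "\<exists>c\<in>Z. le a c \<and> le b c"
        using le_comb_left le_comb_right by blast
    qed
  qed
  moreover have "Z \<subseteq> \<Gamma>"
    unfolding Z_def by blast
  ultimately obtain z where z: "ia_is_sup comb Z z"
    using sup_exists by blast
  have "ia_is_sup comb Y z"
    unfolding ia_is_sup_def
  proof (intro conjI ballI allI impI)
    fix y assume "y \<in> Y"
    then have "\<forall>a\<in>{\<psi>\<in>\<Gamma>. way_below \<psi> y}. le a z"
      using z unfolding ia_is_sup_def Z_def by blast
    then show "le y z"
      using approx unfolding ia_is_sup_def by blast
  next
    fix u assume "\<forall>a\<in>Y. le a u"
    then have "\<forall>a\<in>Z. le a u"
      using way_below_le le_trans unfolding Z_def by blast
    then show "le z u"
      using z unfolding ia_is_sup_def by blast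
  qed
  then show ?thesis by blast
qed

lemma continuous_basis_UNIV:
  assumes "ia_basis_pre comb e \<Gamma>" and "\<forall>\<phi>. ia_is_sup comb {\<psi>\<in>\<Gamma>. way_below \<psi> \<phi>} \<phi>"
  shows "ia_basis_pre comb e UNIV"
  unfolding ia_basis_pre_def using continuous_directed_has_sup[OF assms] by blast

lemma foc_directed_sup_if_s_approx:
  assumes approx: "ia_is_sup comb {\<psi>\<in>\<Delta>. foc \<psi> x = \<psi> \<and> way_below \<psi> s} (foc s x)"
    and X: "ia_directed comb X" and s: "ia_is_sup comb X s"
  shows "ia_is_sup comb ((\<lambda>\<phi>. foc \<phi> x) ` X) (foc s x)"
proof (rule is_sup_cofinal[OF approx])
  show "\<forall>a\<in>(\<lambda>\<phi>. foc \<phi> x) ` X. le a (foc s x)"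
    using s foc_mono unfolding ia_is_sup_def by blast
  show "\<forall>\<psi>\<in>{\<psi>\<in>\<Delta>. foc \<psi> x = \<psi> \<and> way_below \<psi> s}. \<exists>a\<in>(\<lambda>\<phi>. foc \<phi> x) ` X. le \<psi> a"
  proof
    fix \<psi> assume \<psi>: "\<psi> \<in> {\<psi>\<in>\<Delta>. foc \<psi> x = \<psi> \<and> way_below \<psi> s}"
    then obtain c where "c \<in> X" "le \<psi> c"
      using X s le_refl unfolding ia_way_below_def by blast
    then show "\<exists>a\<in>(\<lambda>\<phi>. foc \<phi> x) ` X. le \<psi> a"
      using \<psi> foc_mono[of \<psi> c x] by auto
  qed
qed

lemma s_approx_if_foc_directed_sup:
  assumes basis: "ia_basis_pre comb e \<Gamma>"
    and approx: "ia_is_sup comb {\<psi>\<in>\<Gamma>. way_below \<psi> \<phi>} \<phi>"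
    and foc_sup: "\<forall>X s. ia_directed comb X \<longrightarrow> ia_is_sup comb X s \<longrightarrow>
        ia_is_sup comb ((\<lambda>\<phi>. foc \<phi> x) ` X) (foc s x)"
  shows "ia_is_sup comb {\<psi>. foc \<psi> x = \<psi> \<and> way_below \<psi> \<phi>} (foc \<phi> x)"
proof (rule is_sup_cofinal)
  show "ia_is_sup comb ((\<lambda>\<phi>. foc \<phi> x) ` {\<psi>\<in>\<Gamma>. way_below \<psi> \<phi>}) (foc \<phi> x)"
    using foc_sup directed_way_below_basis[OF basis] approx by blast
  show "\<forall>a\<in>{\<psi>. foc \<psi> x = \<psi> \<and> way_below \<psi> \<phi>}. le a (foc \<phi> x)"
  proof
    fix a assume "a \<in> {\<psi>. foc \<psi> x = \<psi> \<and> way_below \<psi> \<phi>}"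
    then have "foc a x = a" and "le a \<phi>"
      using way_below_le by auto
    then show "le a (foc \<phi> x)"
      using foc_mono[of a \<phi> x] by simp
  qed
  show "\<forall>b\<in>(\<lambda>\<phi>. foc \<phi> x) ` {\<psi>\<in>\<Gamma>. way_below \<psi> \<phi>}.
      \<exists>a\<in>{\<psi>. foc \<psi> x = \<psi> \<and> way_below \<psi> \<phi>}. le b a"
  proof
    fix b assume "b \<in> (\<lambda>\<phi>. foc \<phi> x) ` {\<psi>\<in>\<Gamma>. way_below \<psi> \<phi>}"
    then obtain \<gamma> where "way_below \<gamma> \<phi>" and b: "b = foc \<gamma> x"
      by blast
    then have "way_below b \<phi>" and "foc b x = b"
      using le_way_below_trans[OF foc_le] foc_idem by simp_all
    then show "\<exists>a\<in>{\<psi>. foc \<psi> x = \<psi> \<and> way_below \<psi> \<phi>}. le b a"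
      using le_refl by blast
  qed
qed

end

theorem theorem3p11:
  fixes comb :: "'a \<Rightarrow> 'a \<Rightarrow> 'a" and e :: 'a
    and foc :: "'a \<Rightarrow> 'd::bounded_lattice_top \<Rightarrow> 'a"
  assumes "ia_continuous comb e foc"
  shows "ia_s_continuous comb e foc \<longleftrightarrow>
    (\<forall>X s x. ia_directed comb X \<longrightarrow> ia_is_sup comb X s \<longrightarrow>
        ia_is_sup comb ((\<lambda>\<phi>. foc \<phi> x) ` X) (foc s x))"
proof -
  have IA: "info_algebra comb e foc"
    using assms unfolding ia_continuous_def by blast
  interpret information_algebra comb e foc
    by (rule information_algebra.intro[OF IA])
  obtain \<Gamma> where basis: "ia_basis_pre comb e \<Gamma>"
    and approx: "\<forall>\<phi>. ia_is_sup comb {\<psi>\<in>\<Gamma>. way_below \<psi> \<phi>} \<phi>"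
    using assms unfolding ia_continuous_def by blast
  show ?thesis
  proof
    assume "ia_s_continuous comb e foc"
    then show "\<forall>X s x. ia_directed comb X \<longrightarrow> ia_is_sup comb X s \<longrightarrow>
        ia_is_sup comb ((\<lambda>\<phi>. foc \<phi> x) ` X) (foc s x)"
      unfolding ia_s_continuous_def using foc_directed_sup_if_s_approx by blast
  next
    assume "\<forall>X s x. ia_directed comb X \<longrightarrow> ia_is_sup comb X s \<longrightarrow>
        ia_is_sup comb ((\<lambda>\<phi>. foc \<phi> x) ` X) (foc s x)"
    then have "\<forall>\<phi> x. ia_is_sup comb {\<psi>\<in>UNIV. foc \<psi> x = \<psi> \<and> way_below \<psi> \<phi>} (foc \<phi> x)"
      using s_approx_if_foc_directed_sup[OF basis] approx by simp
    then show "ia_s_continuous comb e foc"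
      using IA continuous_basis_UNIV[OF basis approx] unfolding ia_s_continuous_def by blast
  qed
qed

end
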